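(* Let $X$ be a Banach space, $k\in\mathbb{N}$, and let $(e_n)_n\in\mathcal{SM}_k(X)$ be a Schauder basic sequence; let $E$ be the Banach space with Schauder basis $(e_n)_n$. Let $d\in\mathbb{N}$ and let $(\widetilde e_n)_n$ be a plegma block generated $d$-spreading model of $E$. Then $(\widetilde e_n)_n\in\mathcal{SM}_{k+d}(X)$.
   Context: $[M]^k$: $k$-subsets of $M\subseteq\mathbb{N}$ (increasing enumerations, $M(l)$ the $l$-th element of $M$). A $k$-sequence in $X$ is a map $[\mathbb{N}]^k\to X$, $s\mapsto x_s$. Plegma family: $(s_j)_{j=1}^l$ in $[M]^k$ with $s_1(i)<\dots<s_l(i)$ for all $i\le k$ and $s_l(i)<s_1(i+1)$ for $i<k$; a plegma pair is a plegma family of length 2. $(x_s)_{s\in[M]^k}$ generates the Hamel basis $(e_n)$ of a seminormed space $(E,\|\cdot\|_* )$ as a $k$-spreading model if for some null sequence $\delta_l>0$: $|\|\sum_{j=1}^m a_jx_{s_j}\|-\|\sum_{j=1}^m a_je_j\|_*|\le\delta_l$ for all $m\le l$, plegma $(s_j)_{j=1}^m$ in $[M]^k$ with $s_1(1)\ge M(l)$, $a_j\in[-1,1]$. $\mathcal{SM}_k(X)$ is the set of all sequences generated in this way by some $k$-sequence in $X$ and some infinite $M$. For a Banach space $Y$ with a Schauder basis, a $d$-sequence $(y_t)_{t\in[\mathbb{N}]^d}$ is plegma block if the $y_t$ are finitely supported and $\mathrm{supp}(y_{t_1})<\mathrm{supp}(y_{t_2})$ (i.e. $\max<\min$) for every plegma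 pair $(t_1,t_2)$ in $[\mathbb{N}]^d$; a $d$-spreading model of $Y$ is plegma block generated if it is generated by some plegma block $d$-sequence. *)

theory Defs
  imports "HOL-Analysis.Analysis" "HOL-Library.Infinite_Set"
begin

text \<open>k-subsets of naturals are finite sets of cardinality k; the i-th element
  (0-indexed here, i.e. elt s 0 is s(1) of the paper) of s in increasing order.\<close>
definition elt :: "nat set \<Rightarrow> nat \<Rightarrow> nat" where
  "elt s i = sorted_list_of_set s ! i"

text \<open>Plegma family s 0, ..., s (l-1) in [M]^k (indices shifted by one).\<close>
definition plegma :: "nat \<Rightarrow> nat set \<Rightarrow> (nat \<Rightarrow> nat set) \<Rightarrow> nat \<Rightarrow> bool" where
  "plegma k M s l \<longleftrightarrow>
     (\<forall>j<l. s j \<subseteq> M \<and> finite (s j) \<and> card (s j) = k) \<and>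
     (\<forall>i<k. \<forall>j. Suc j < l \<longrightarrow> elt (s j) i < elt (s (Suc j)) i) \<and>
     (\<forall>i. Suc i < k \<longrightarrow> elt (s (l - 1)) i < elt (s 0) (Suc i))"

definition seminorm_on :: "'c::real_vector set \<Rightarrow> ('c \<Rightarrow> real) \<Rightarrow> bool" where
  "seminorm_on V p \<longleftrightarrow> subspace V \<and> (\<forall>v\<in>V. 0 \<le> p v) \<and>
     (\<forall>v\<in>V. \<forall>c. p (c *\<^sub>R v) = \<bar>c\<bar> * p v) \<and>
     (\<forall>v\<in>V. \<forall>w\<in>V. p (v + w) \<le> p v + p w)"

text \<open>The k-sequence x (restricted to [M]^k) generates the sequence e with seminorm p
  (sequence indices shifted: e 0 is e_1 of the paper; M(l) is enumerate M (l-1)).\<close>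
definition generates ::
  "nat \<Rightarrow> (nat set \<Rightarrow> 'a::real_normed_vector) \<Rightarrow> nat set \<Rightarrow> (nat \<Rightarrow> 'c::real_vector) \<Rightarrow> ('c \<Rightarrow> real) \<Rightarrow> bool" where
  "generates k x M e p \<longleftrightarrow>
     (\<exists>\<delta>::nat \<Rightarrow> real. (\<forall>l. 0 < \<delta> l) \<and> \<delta> \<longlonglongrightarrow> 0 \<and>
        (\<forall>l m s a. 1 \<le> m \<longrightarrow> m \<le> l \<longrightarrow> plegma k M s m \<longrightarrow>
           enumerate M (l - 1) \<le> elt (s 0) 0 \<longrightarrow> (\<forall>j<m. \<bar>a j\<bar> \<le> (1::real)) \<longrightarrow>
           \<bar>norm (\<Sum>j<m. a j *\<^sub>R x (s j)) - p (\<Sum>j<m. a j *\<^sub>R e j)\<bar> \<le> \<delta> l))"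

definition spreading_model ::
  "nat \<Rightarrow> (nat set \<Rightarrow> 'a::real_normed_vector) \<Rightarrow> nat set \<Rightarrow> (nat \<Rightarrow> 'c::real_vector) \<Rightarrow> ('c \<Rightarrow> real) \<Rightarrow> 'c set \<Rightarrow> bool" where
  "spreading_model k x M e p V \<longleftrightarrow>
     V = span (range e) \<and> inj e \<and> independent (range e) \<and> seminorm_on V p \<and>
     generates k x M e p"

definition SM :: "nat \<Rightarrow> 'a::real_normed_vector set \<Rightarrow> (nat \<Rightarrow> 'c::real_vector) \<Rightarrow> ('c \<Rightarrow> real) \<Rightarrow> 'c set \<Rightarrow> bool" where
  "SM k X e p V \<longleftrightarrow>
     (\<exists>(x::nat set \<Rightarrow> 'a) M. infinite M \<and> (\<forall>s. finite s \<and> card s = k \<longrightarrow> x s \<in> X) \<and>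
        spreading_model k x M e p V)"

definition schauder_basis :: "(nat \<Rightarrow> 'b::real_normed_vector) \<Rightarrow> bool" where
  "schauder_basis e \<longleftrightarrow> (\<forall>y. \<exists>!a::nat \<Rightarrow> real. (\<lambda>n. \<Sum>j<n. a j *\<^sub>R e j) \<longlonglongrightarrow> y)"

definition coeff :: "(nat \<Rightarrow> 'b::real_normed_vector) \<Rightarrow> 'b \<Rightarrow> nat \<Rightarrow> real" where
  "coeff e y = (THE a. (\<lambda>n. \<Sum>j<n. a j *\<^sub>R e j) \<longlonglongrightarrow> y)"

definition supp :: "(nat \<Rightarrow> 'b::real_normed_vector) \<Rightarrow> 'b \<Rightarrow> nat set" where
  "supp e y = {n. coeff e y n \<noteq> 0}"

definition plegma_block :: "nat \<Rightarrow> (nat \<Rightarrow> 'b::real_normed_vector) \<Rightarrow> (nat set \<Rightarrow> 'b) \<Rightarrow> bool" where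
  "plegma_block d e y \<longleftrightarrow>
     (\<forall>t. finite t \<and> card t = d \<longrightarrow> finite (supp e (y t))) \<and>
     (\<forall>t. plegma d UNIV t 2 \<longrightarrow> (\<forall>a\<in>supp e (y (t 0)). \<forall>b\<in>supp e (y (t 1)). a < b))"

end

theory Submission
  imports Defs
begin

text \<open>
  Let the \<open>k\<close>-sequence \<open>x\<close> in \<open>X\<close> generate the basis \<open>e\<close> of \<open>E\<close> on \<open>Mx\<close>, and
  let the plegma block \<open>d\<close>-sequence \<open>y\<close> in \<open>E\<close> generate \<open>et\<close> on \<open>My\<close>.  For a \<open>(k + d)\<close>-set \<open>v\<close>,
  its first \<open>d\<close> elements \<open>t\<close> select the finitely supported vector \<open>y t = \<Sum>i. c\<^sub>i e\<^sub>i\<close>, and we set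
  \<open>z v = \<Sum>i. c\<^sub>i x (s\<^sub>i)\<close>, where the \<open>k\<close>-set \<open>s\<^sub>i\<close> is obtained by moving each of the last \<open>k\<close>
  elements \<open>n\<close> of \<open>v\<close> to position \<open>\<psi> n + i\<close> of \<open>Mx\<close>, for a fast-growing spacing \<open>\<psi>\<close>.
  For a plegma family \<open>u\<^sub>1, \<dots>, u\<^sub>m\<close> in \<open>[My]^(k+d)\<close> the heads form a plegma family, so the blocks
  \<open>y (t\<^sub>j)\<close> have successive supports; hence \<open>\<Sum>j. \<alpha>\<^sub>j z (u\<^sub>j)\<close> and \<open>\<Sum>j. \<alpha>\<^sub>j y (t\<^sub>j)\<close> are one and the
  same combination \<open>\<Sum>i. b\<^sub>i x (s\<^sub>i)\<close> resp. \<open>\<Sum>i. b\<^sub>i e\<^sub>i\<close>, and the \<open>s\<^sub>i\<close> form a plegma family in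
  \<open>[Mx]^k\<close> starting late enough that the first spreading model absorbs the coefficient bound.
\<close>

section \<open>Elements of finite sets of naturals\<close>

lemma elt_strict_mono:
  assumes "finite u" "c < c'" "c' < card u"
  shows "elt u c < elt u c'"
proof -
  have "sorted_wrt (<) (sorted_list_of_set u)" by (rule strict_sorted_list_of_set)
  moreover have "length (sorted_list_of_set u) = card u" by simp
  ultimately show ?thesis using assms unfolding elt_def
    by (simp add: sorted_wrt_iff_nth_less)
qed

lemma elt_mono:
  assumes "finite u" "c \<le> c'" "c' < card u"
  shows "elt u c \<le> elt u c'"
  using elt_strict_mono[OF assms(1) _ assms(3), of c] assms(2) by (cases "c = c'") auto

lemma elt_in:
  assumes "finite u" "c < card u"
  shows "elt u c \<in> u"
proof -
  have "sorted_list_of_set u ! c \<in> set (sorted_list_of_set u)"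
    using assms by (intro nth_mem) simp
  then show ?thesis using assms unfolding elt_def by simp
qed

lemma elt_increasing_image:
  fixes f :: "nat \<Rightarrow> nat"
  assumes "\<And>c. Suc c < n \<Longrightarrow> f c < f (Suc c)"
  shows "\<And>c. c < n \<Longrightarrow> elt (f ` {..<n}) c = f c"
    and "card (f ` {..<n}) = n" and "finite (f ` {..<n})"
proof -
  have less: "f a < f b" if "a < b" "b < n" for a b
    using that
  proof (induction b)
    case 0 then show ?case by simp
  next
    case (Suc b)
    then show ?case using assms[of b] by (cases "a = b") auto
  qed
  then have "sorted_wrt (<) (map f [0..<n])"
    by (auto simp: sorted_wrt_iff_nth_less)
  then have "sorted (map f [0..<n])" "distinct (map f [0..<n])"
    by (simp_all add: strict_sorted_iff)
  then have listing: "sorted_list_of_set (f ` {..<n}) = map f [0..<n]"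
    using sorted_list_of_set.idem_if_sorted_distinct[of "map f [0..<n]"]
    by (simp add: lessThan_atLeast0)
  show "elt (f ` {..<n}) c = f c" if "c < n" for c
    using that listing unfolding elt_def by simp
  have "inj_on f {..<n}"
    by (metis inj_on_def lessThan_iff linorder_neq_iff less)
  then show "card (f ` {..<n}) = n" by (simp add: card_image)
  show "finite (f ` {..<n})" by simp
qed

definition head :: "nat \<Rightarrow> nat set \<Rightarrow> nat set" where
  "head d v = elt v ` {..<d}"

lemma head_props:
  assumes "finite v" "d \<le> card v"
  shows "\<And>c. c < d \<Longrightarrow> elt (head d v) c = elt v c"
    and "card (head d v) = d" and "finite (head d v)" and "head d v \<subseteq> v"
proof -
  have inc: "\<And>c. Suc c < d \<Longrightarrow> elt v c < elt v (Suc c)"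
    using elt_strict_mono[OF assms(1)] assms(2) by simp
  have image: "\<And>c. c < d \<Longrightarrow> elt (elt v ` {..<d}) c = elt v c"
    "card (elt v ` {..<d}) = d" "finite (elt v ` {..<d})"
    using elt_increasing_image[of d "elt v"] inc by blast+
  show "elt (head d v) c = elt v c" if "c < d" for c
    using image(1) that unfolding head_def by blast
  show "card (head d v) = d" "finite (head d v)"
    using image(2,3) unfolding head_def by blast+
  show "head d v \<subseteq> v"
    unfolding head_def using elt_in[OF assms(1)] assms(2) by auto
qed

section \<open>Plegma families\<close>

lemma plegma_le:
  assumes "plegma n M u m" "c < n" "j \<le> j'" "j' < m"
  shows "elt (u j) c \<le> elt (u j') c"
  using assms(3,4)
proof (induction j')
  case 0 then show ?case by simp
next
  case (Suc j')
  show ?case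
  proof (cases "j = Suc j'")
    case False
    then have "elt (u j) c \<le> elt (u j') c" using Suc by auto
    moreover have "elt (u j') c < elt (u (Suc j')) c"
      using assms(1,2) Suc.prems unfolding plegma_def by auto
    ultimately show ?thesis by simp
  qed simp
qed

lemma plegma_less:
  assumes "plegma n M u m" "c < n" "j < j'" "j' < m"
  shows "elt (u j) c < elt (u j') c"
proof -
  obtain j'' where j'': "j' = Suc j''" using assms(3) by (cases j') auto
  have "elt (u j) c \<le> elt (u j'') c" using plegma_le[OF assms(1,2)] assms j'' by auto
  also have "\<dots> < elt (u j') c"
    using assms(1,2,4) j'' unfolding plegma_def by auto
  finally show ?thesis .
qed

lemma plegma_cross:
  assumes "plegma n M u m" "c < c'" "c' < n" "j < m" "j' < m"
  shows "elt (u j) c < elt (u j') c'"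
proof -
  have "finite (u 0)" "card (u 0) = n" using assms(1,4) unfolding plegma_def by auto
  have "elt (u j) c \<le> elt (u (m - 1)) c" using plegma_le[OF assms(1)] assms by auto
  also have "\<dots> < elt (u 0) (Suc c)" using assms(1,2,3) unfolding plegma_def by auto
  also have "\<dots> \<le> elt (u 0) c'"
    using elt_mono[OF \<open>finite (u 0)\<close>] \<open>card (u 0) = n\<close> assms(2,3) by simp
  also have "\<dots> \<le> elt (u j') c'" using plegma_le[OF assms(1)] assms by auto
  finally show ?thesis .
qed

lemma plegma_pair:
  assumes "plegma n M u m" "j' < j" "j < m"
  shows "plegma n UNIV (\<lambda>q. if q = 0 then u j' else u j) 2"
  using assms plegma_less[OF assms(1), of _ j' j] plegma_cross[OF assms(1), of _ _ j j']
  unfolding plegma_def by (auto simp: less_2_cases_iff)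

lemma plegma_head:
  assumes "plegma n M u m" "0 < m" "d \<le> n"
  shows "plegma d M (\<lambda>j. head d (u j)) m"
proof -
  have u: "u j \<subseteq> M" "finite (u j)" "card (u j) = n" if "j < m" for j
    using assms(1) that unfolding plegma_def by auto
  have hd: "card (head d (u j)) = d" "finite (head d (u j))" "head d (u j) \<subseteq> u j"
    if "j < m" for j
    using head_props[OF u(2)[OF that]] u(3)[OF that] assms(3) by auto
  have h: "elt (head d (u j)) c = elt (u j) c" if "j < m" "c < d" for j c
    using head_props[OF u(2)[OF that(1)]] u(3)[OF that(1)] assms(3) that(2) by auto
  show ?thesis
    unfolding plegma_def
  proof (intro conjI allI impI)
    show "head d (u j) \<subseteq> M" "finite (head d (u j))" "card (head d (u j)) = d" if "j < m" for j
      using hd[of j] u[of j] that by auto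
    show "elt (head d (u j)) c < elt (head d (u (Suc j))) c" if "c < d" "Suc j < m" for c j
      using that h[of j c] h[of "Suc j" c] plegma_less[OF assms(1), of c j "Suc j"] assms(3) by simp
    show "elt (head d (u (m - 1))) c < elt (head d (u 0)) (Suc c)" if "Suc c < d" for c
      using that h[of "m - 1" c] h[of 0 "Suc c"] assms(2,3) plegma_cross[OF assms(1), of c "Suc c" "m - 1" 0]
      by simp
  qed
qed

fun spaced :: "(nat \<Rightarrow> nat) \<Rightarrow> (nat \<Rightarrow> nat) \<Rightarrow> nat \<Rightarrow> nat" where
  "spaced G L 0 = L 0"
| "spaced G L (Suc a) = spaced G L a + G a + 1 + L (Suc a)"

lemma spaced_ge: "L a \<le> spaced G L a"
  by (cases a) auto

lemma spaced_gap: "a < b \<Longrightarrow> spaced G L a + G a + 1 \<le> spaced G L b"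
proof (induction b)
  case 0 then show ?case by simp
next
  case (Suc b) then show ?case by (cases "a = b") auto
qed

lemma spaced_strict_mono: "strict_mono (spaced G L)"
proof (rule strict_monoI)
  fix a b :: nat assume "a < b"
  then show "spaced G L a < spaced G L b" using spaced_gap[of a b G L] by simp
qed

text \<open>For finitely many successive finite sets \<open>S 0 < \<dots> < S (m - 1)\<close> of naturals, the
  monotone map sending every element of \<open>S j\<close> to \<open>j\<close>.\<close>
definition block_index :: "(nat \<Rightarrow> nat set) \<Rightarrow> nat \<Rightarrow> nat \<Rightarrow> nat" where
  "block_index S m i = min (m - 1) (card {j. j < m \<and> (\<forall>j'\<le>j. \<forall>n\<in>S j'. n < i)})"

lemma block_index_less: "0 < m \<Longrightarrow> block_index S m i < m"
  unfolding block_index_def by simp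

lemma block_index_mono: "i \<le> i' \<Longrightarrow> block_index S m i \<le> block_index S m i'"
  unfolding block_index_def
  by (intro min.mono order.refl card_mono) (auto intro: less_le_trans)

lemma block_index_eq:
  assumes successive: "\<And>j' j n n'. j' < j \<Longrightarrow> j < m \<Longrightarrow> n \<in> S j' \<Longrightarrow> n' \<in> S j \<Longrightarrow> n < n'"
    and "j < m" "i \<in> S j"
  shows "block_index S m i = j"
proof -
  have "{j''. j'' < m \<and> (\<forall>j'\<le>j''. \<forall>n\<in>S j'. n < i)} = {..<j}"
  proof (intro equalityI subsetI)
    fix j'' assume "j'' \<in> {j''. j'' < m \<and> (\<forall>j'\<le>j''. \<forall>n\<in>S j'. n < i)}"
    then have "\<forall>j'\<le>j''. \<forall>n\<in>S j'. n < i" by simp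
    then have "\<not> j \<le> j''" using assms(3) by blast
    then show "j'' \<in> {..<j}" by simp
  next
    fix j'' assume "j'' \<in> {..<j}"
    then show "j'' \<in> {j''. j'' < m \<and> (\<forall>j'\<le>j''. \<forall>n\<in>S j'. n < i)}"
      using successive[of _ j _ i] assms(2,3) by (auto intro: le_less_trans)
  qed
  then show ?thesis unfolding block_index_def using assms(2) by simp
qed

lemma sum_regroup_blocks:
  fixes v :: "nat \<Rightarrow> nat \<Rightarrow> 'v::real_vector"
  assumes S: "\<And>j. j < m \<Longrightarrow> finite (S j) \<and> S j \<subseteq> {..<N}"
    and J: "\<And>j i. j < m \<Longrightarrow> i \<in> S j \<Longrightarrow> J i = j"
    and Jm: "\<And>i. J i < m"
    and w: "\<And>j i. i \<notin> S j \<Longrightarrow> w j i = 0"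
  shows "(\<Sum>i<N. (\<alpha> (J i) * w (J i) i) *\<^sub>R v (J i) i) =
         (\<Sum>j<m. \<alpha> j *\<^sub>R (\<Sum>i\<in>S j. w j i *\<^sub>R v j i))"
proof -
  have single: "(\<Sum>j<m. (\<alpha> j * w j i) *\<^sub>R v j i) = (\<alpha> (J i) * w (J i) i) *\<^sub>R v (J i) i" for i
  proof -
    have "(\<Sum>j\<in>{..<m} - {J i}. (\<alpha> j * w j i) *\<^sub>R v j i) = 0"
    proof (intro sum.neutral ballI)
      fix j assume "j \<in> {..<m} - {J i}"
      then have "i \<notin> S j" using J by auto
      then show "(\<alpha> j * w j i) *\<^sub>R v j i = 0" using w by simp
    qed
    moreover have "(\<Sum>j<m. (\<alpha> j * w j i) *\<^sub>R v j i) = (\<alpha> (J i) * w (J i) i) *\<^sub>R v (J i) i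
         + (\<Sum>j\<in>{..<m} - {J i}. (\<alpha> j * w j i) *\<^sub>R v j i)"
      by (rule sum.remove) (use Jm in auto)
    ultimately show ?thesis by simp
  qed
  have block: "(\<Sum>i<N. w j i *\<^sub>R v j i) = (\<Sum>i\<in>S j. w j i *\<^sub>R v j i)" if "j < m" for j
    using S[OF that] w by (intro sum.mono_neutral_right) auto
  have "(\<Sum>i<N. (\<alpha> (J i) * w (J i) i) *\<^sub>R v (J i) i) =
        (\<Sum>i<N. \<Sum>j<m. (\<alpha> j * w j i) *\<^sub>R v j i)"
    by (simp add: single)
  also have "\<dots> = (\<Sum>j<m. \<alpha> j *\<^sub>R (\<Sum>i<N. w j i *\<^sub>R v j i))"
    by (subst sum.swap) (simp add: scaleR_sum_right)
  also have "\<dots> = (\<Sum>j<m. \<alpha> j *\<^sub>R (\<Sum>i\<in>S j. w j i *\<^sub>R v j i))"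
    using block by simp
  finally show ?thesis .
qed

definition lift_tail :: "nat set \<Rightarrow> (nat \<Rightarrow> nat) \<Rightarrow> nat \<Rightarrow> nat \<Rightarrow> nat set \<Rightarrow> nat \<Rightarrow> nat set" where
  "lift_tail M \<psi> d k v i = (\<lambda>c. enumerate M (\<psi> (elt v (d + c)) + i)) ` {..<k}"

lemma lift_tail_props:
  assumes "infinite M" "strict_mono \<psi>" "finite v" "card v = k + d"
  shows "\<And>c. c < k \<Longrightarrow> elt (lift_tail M \<psi> d k v i) c = enumerate M (\<psi> (elt v (d + c)) + i)"
    and "card (lift_tail M \<psi> d k v i) = k" and "finite (lift_tail M \<psi> d k v i)"
    and "lift_tail M \<psi> d k v i \<subseteq> M"
proof -
  define f where "f c = enumerate M (\<psi> (elt v (d + c)) + i)" for c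
  have tail: "lift_tail M \<psi> d k v i = f ` {..<k}"
    unfolding lift_tail_def f_def ..
  have inc: "\<And>c. Suc c < k \<Longrightarrow> f c < f (Suc c)"
  proof -
    fix c assume "Suc c < k"
    then have "elt v (d + c) < elt v (d + Suc c)"
      using elt_strict_mono[OF assms(3)] assms(4) by simp
    then show "f c < f (Suc c)" unfolding f_def using assms(1,2) by (simp add: strict_mono_less)
  qed
  have image: "\<And>c. c < k \<Longrightarrow> elt (f ` {..<k}) c = f c"
    "card (f ` {..<k}) = k" "finite (f ` {..<k})"
    using elt_increasing_image[of k f] inc by blast+
  show "elt (lift_tail M \<psi> d k v i) c = enumerate M (\<psi> (elt v (d + c)) + i)" if "c < k" for c
    using image(1)[OF that] unfolding tail f_def .
  show "card (lift_tail M \<psi> d k v i) = k" "finite (lift_tail M \<psi> d k v i)"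
    using image(2,3) unfolding tail by blast+
  show "lift_tail M \<psi> d k v i \<subseteq> M"
    unfolding lift_tail_def using enumerate_in_set[OF assms(1)] by auto
qed

lemma plegma_lift_tail:
  assumes M: "infinite M" and u: "plegma (k + d) M' u m"
    and J: "\<And>i. J i < m" "\<And>i i'. i \<le> i' \<Longrightarrow> J i \<le> J i'"
    and N: "\<And>j c. j < m \<Longrightarrow> c < k \<Longrightarrow> N \<le> G (elt (u j) (d + c))"
  shows "plegma k M (\<lambda>i. lift_tail M (spaced G L) d k (u (J i)) i) N"
proof -
  let ?\<psi> = "spaced G L"
  have uJ: "finite (u (J i))" "card (u (J i)) = k + d" for i
    using u J(1)[of i] unfolding plegma_def by auto
  have s: "\<And>c. c < k \<Longrightarrow> elt (lift_tail M (spaced G L) d k (u (J i)) i) c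
                  = enumerate M (spaced G L (elt (u (J i)) (d + c)) + i)"
    "card (lift_tail M (spaced G L) d k (u (J i)) i) = k"
    "finite (lift_tail M (spaced G L) d k (u (J i)) i)"
    "lift_tail M (spaced G L) d k (u (J i)) i \<subseteq> M" for i
    using lift_tail_props[OF M spaced_strict_mono uJ] by blast+
  show ?thesis
    unfolding plegma_def
  proof (intro conjI allI impI)
    show "lift_tail M ?\<psi> d k (u (J i)) i \<subseteq> M" "finite (lift_tail M ?\<psi> d k (u (J i)) i)"
      "card (lift_tail M ?\<psi> d k (u (J i)) i) = k" for i
      using s by blast+
    show "elt (lift_tail M ?\<psi> d k (u (J i)) i) c < elt (lift_tail M ?\<psi> d k (u (J (Suc i))) (Suc i)) c"
      if "c < k" "Suc i < N" for c i
    proof -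
      have "elt (u (J i)) (d + c) \<le> elt (u (J (Suc i))) (d + c)"
        using plegma_le[OF u, of "d + c" "J i" "J (Suc i)"] that J by simp
      then have "?\<psi> (elt (u (J i)) (d + c)) \<le> ?\<psi> (elt (u (J (Suc i))) (d + c))"
        by (simp add: strict_mono_less_eq[OF spaced_strict_mono])
      then show ?thesis using s that M by simp
    qed
    show "elt (lift_tail M ?\<psi> d k (u (J (N - 1))) (N - 1)) c < elt (lift_tail M ?\<psi> d k (u (J 0)) 0) (Suc c)"
      if "Suc c < k" for c
    proof -
      define A where "A = elt (u (J (N - 1))) (d + c)"
      define B where "B = elt (u (J 0)) (d + Suc c)"
      have "A < B" unfolding A_def B_def
        using plegma_cross[OF u, of "d + c" "d + Suc c" "J (N - 1)" "J 0"] that J(1) by simp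
      then have "?\<psi> A + G A + 1 \<le> ?\<psi> B" by (rule spaced_gap)
      moreover have "N \<le> G A" unfolding A_def using N J(1) that by simp
      ultimately have "?\<psi> A + (N - 1) < ?\<psi> B + 0" by linarith
      then show ?thesis using s that M unfolding A_def B_def by simp
    qed
  qed
qed

lemma schauder_expand:
  fixes e :: "nat \<Rightarrow> 'b::real_normed_vector"
  assumes basis: "schauder_basis e" and fin: "finite (supp e v)"
  shows "v = (\<Sum>i\<in>supp e v. coeff e v i *\<^sub>R e i)"
proof -
  let ?c = "coeff e v"
  have "\<exists>!a::nat \<Rightarrow> real. (\<lambda>n. \<Sum>j<n. a j *\<^sub>R e j) \<longlonglongrightarrow> v"
    using basis unfolding schauder_basis_def by blast
  then have lim: "(\<lambda>n. \<Sum>j<n. ?c j *\<^sub>R e j) \<longlonglongrightarrow> v"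
    unfolding coeff_def by (rule theI')
  obtain K where K: "supp e v \<subseteq> {..<K}"
    using fin finite_nat_iff_bounded by blast
  have "(\<Sum>j<n. ?c j *\<^sub>R e j) = (\<Sum>i\<in>supp e v. ?c i *\<^sub>R e i)" if "K \<le> n" for n
    using K that by (intro sum.mono_neutral_right) (auto simp: supp_def)
  then have "eventually (\<lambda>n. (\<Sum>j<n. ?c j *\<^sub>R e j) = (\<Sum>i\<in>supp e v. ?c i *\<^sub>R e i)) sequentially"
    unfolding eventually_sequentially by blast
  then have "(\<lambda>n. \<Sum>j<n. ?c j *\<^sub>R e j) \<longlonglongrightarrow> (\<Sum>i\<in>supp e v. ?c i *\<^sub>R e i)"
    by (rule tendsto_eventually)
  then show ?thesis using lim LIMSEQ_unique by blast
qed

lemma norm_diff_rescale: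
  fixes v :: "nat \<Rightarrow> 'a::real_normed_vector" and w :: "nat \<Rightarrow> 'b::real_normed_vector"
  assumes "0 < C"
    and "\<bar>norm (\<Sum>i\<in>A. (b i / C) *\<^sub>R v i) - norm (\<Sum>i\<in>A. (b i / C) *\<^sub>R w i)\<bar> \<le> \<delta>"
  shows "\<bar>norm (\<Sum>i\<in>A. b i *\<^sub>R v i) - norm (\<Sum>i\<in>A. b i *\<^sub>R w i)\<bar> \<le> C * \<delta>"
proof -
  have scale: "(\<Sum>i\<in>A. (b i / C) *\<^sub>R u i) = inverse C *\<^sub>R (\<Sum>i\<in>A. b i *\<^sub>R u i)"
    for u :: "nat \<Rightarrow> 'x::real_normed_vector"
    by (simp add: scaleR_sum_right divide_inverse mult.commute)
  define D where "D = \<bar>norm (\<Sum>i\<in>A. b i *\<^sub>R v i) - norm (\<Sum>i\<in>A. b i *\<^sub>R w i)\<bar>"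
  have "inverse C * D \<le> \<delta>"
    using assms unfolding scale D_def by (simp add: right_diff_distrib[symmetric] abs_mult)
  then have "C * (inverse C * D) \<le> C * \<delta>"
    using assms(1) by (intro mult_left_mono) auto
  moreover have "C * (inverse C * D) = D" using assms(1) by simp
  ultimately show ?thesis unfolding D_def by simp
qed

section \<open>The lifted sequence\<close>

locale spreading_lift =
  fixes k d :: nat
    and x :: "nat set \<Rightarrow> 'a::real_normed_vector" and Mx :: "nat set" and \<delta>x :: "nat \<Rightarrow> real"
    and e :: "nat \<Rightarrow> 'b::real_normed_vector"
    and y :: "nat set \<Rightarrow> 'b" and My :: "nat set" and \<delta>y :: "nat \<Rightarrow> real"
    and et :: "nat \<Rightarrow> 'c::real_vector" and p :: "'c \<Rightarrow> real"
  assumes k_pos: "1 \<le> k" and d_pos: "1 \<le> d"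
    and basis: "schauder_basis e" and block: "plegma_block d e y"
    and Mx_infinite: "infinite Mx" and My_infinite: "infinite My"
    and \<delta>x_lim: "\<delta>x \<longlonglongrightarrow> 0"
    and x_model: "\<And>l m s a. 1 \<le> m \<Longrightarrow> m \<le> l \<Longrightarrow> plegma k Mx s m \<Longrightarrow>
           enumerate Mx (l - 1) \<le> elt (s 0) 0 \<Longrightarrow> (\<forall>j<m. \<bar>a j\<bar> \<le> 1) \<Longrightarrow>
           \<bar>norm (\<Sum>j<m. a j *\<^sub>R x (s j)) - norm (\<Sum>j<m. a j *\<^sub>R e j)\<bar> \<le> \<delta>x l"
    and \<delta>y_pos: "\<And>l. 0 < \<delta>y l" and \<delta>y_lim: "\<delta>y \<longlonglongrightarrow> 0"
    and y_model: "\<And>l m s a. 1 \<le> m \<Longrightarrow> m \<le> l \<Longrightarrow> plegma d My s m \<Longrightarrow>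
           enumerate My (l - 1) \<le> elt (s 0) 0 \<Longrightarrow> (\<forall>j<m. \<bar>a j\<bar> \<le> 1) \<Longrightarrow>
           \<bar>norm (\<Sum>j<m. a j *\<^sub>R y (s j)) - p (\<Sum>j<m. a j *\<^sub>R et j)\<bar> \<le> \<delta>y l"
begin

definition support :: "nat set \<Rightarrow> nat set" where
  "support t = supp e (y t)"

definition coeffs :: "nat set \<Rightarrow> nat \<Rightarrow> real" where
  "coeffs t = coeff e (y t)"

definition support_end :: "nat set \<Rightarrow> nat" where
  "support_end t = Suc (Max (insert 0 (support t)))"

text \<open>\<open>G a\<close> bounds the supports, and \<open>C a\<close> the coefficients, of all \<open>y t\<close> with \<open>t \<subseteq> {..<a}\<close>.\<close>
definition G :: "nat \<Rightarrow> nat" where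
  "G a = 1 + (\<Sum>t\<in>Pow {..<a}. support_end t)"

definition C :: "nat \<Rightarrow> real" where
  "C a = 1 + (\<Sum>t\<in>Pow {..<a}. \<Sum>i<support_end t. \<bar>coeffs t i\<bar>)"

text \<open>From index \<open>L0 a\<close> on, the error \<open>\<delta>x\<close> is small enough to absorb the coefficient bound \<open>C a\<close>.\<close>
definition L0 :: "nat \<Rightarrow> nat" where
  "L0 a = (LEAST L. \<forall>l\<ge>L. \<delta>x l \<le> 1 / ((real a + 1) * C a))"

definition \<psi> :: "nat \<Rightarrow> nat" where
  "\<psi> = spaced G (\<lambda>a. max (G a) (L0 a))"

definition z :: "nat set \<Rightarrow> 'a" where
  "z v = (\<Sum>i\<in>support (head d v). coeffs (head d v) i *\<^sub>R x (lift_tail Mx \<psi> d k v i))"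

lemma coeffs_outside_support: "i \<notin> support t \<Longrightarrow> coeffs t i = 0"
  unfolding support_def coeffs_def supp_def by simp

lemma support_less_end:
  assumes "finite (support t)"
  shows "support t \<subseteq> {..<support_end t}"
proof
  fix i assume "i \<in> support t"
  then have "i \<le> Max (insert 0 (support t))" using assms by simp
  then show "i \<in> {..<support_end t}" unfolding support_end_def by simp
qed

lemma support_below_G:
  assumes "finite (support t)" "t \<subseteq> {..<a}"
  shows "support t \<subseteq> {..<G a}"
proof -
  have "support_end t \<le> (\<Sum>t\<in>Pow {..<a}. support_end t)"
    using assms(2) by (intro member_le_sum) auto
  then show ?thesis using support_less_end[OF assms(1)] unfolding G_def by auto
qed

lemma G_pos: "1 \<le> G a"
  unfolding G_def by simp

lemma G_mono: "a \<le> a' \<Longrightarrow> G a \<le> G a'"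
  unfolding G_def by (intro add_left_mono sum_mono2) auto

lemma C_ge_1: "1 \<le> C a"
  unfolding C_def by (simp add: sum_nonneg)

lemma coeffs_le_C:
  assumes "finite (support t)" "t \<subseteq> {..<a}"
  shows "\<bar>coeffs t i\<bar> \<le> C a"
proof (cases "i \<in> support t")
  case True
  then have "\<bar>coeffs t i\<bar> \<le> (\<Sum>i<support_end t. \<bar>coeffs t i\<bar>)"
    using support_less_end[OF assms(1)] by (intro member_le_sum) auto
  also have "\<dots> \<le> (\<Sum>t\<in>Pow {..<a}. \<Sum>i<support_end t. \<bar>coeffs t i\<bar>)"
    using assms(2) by (intro member_le_sum) (auto intro: sum_nonneg)
  finally show ?thesis unfolding C_def by simp
next
  case False
  then show ?thesis using coeffs_outside_support C_ge_1[of a] by simp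
qed

lemma \<delta>x_small:
  assumes "L0 a \<le> l"
  shows "\<delta>x l \<le> 1 / ((real a + 1) * C a)"
proof -
  have "0 < 1 / ((real a + 1) * C a)" using C_ge_1[of a] by simp
  with \<delta>x_lim have "eventually (\<lambda>l. dist (\<delta>x l) 0 < 1 / ((real a + 1) * C a)) sequentially"
    by (rule tendstoD)
  then obtain L where "\<forall>l\<ge>L. \<bar>\<delta>x l\<bar> < 1 / ((real a + 1) * C a)"
    unfolding eventually_sequentially dist_real_def by auto
  then have "\<forall>l\<ge>L. \<delta>x l \<le> 1 / ((real a + 1) * C a)"
    by (simp add: abs_less_iff less_imp_le)
  then have "\<exists>L. \<forall>l\<ge>L. \<delta>x l \<le> 1 / ((real a + 1) * C a)" ..
  then have "\<forall>l\<ge>L0 a. \<delta>x l \<le> 1 / ((real a + 1) * C a)"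
    unfolding L0_def by (rule LeastI_ex)
  then show ?thesis using assms by blast
qed

end

locale lift_family = spreading_lift +
  fixes m :: nat and u :: "nat \<Rightarrow> nat set"
  assumes m_pos: "0 < m" and u_plegma: "plegma (k + d) My u m"
begin

definition t :: "nat \<Rightarrow> nat set" where
  "t j = head d (u j)"

definition pivot :: nat where
  "pivot = elt (u 0) d"

definition N :: nat where
  "N = G pivot"

definition J :: "nat \<Rightarrow> nat" where
  "J = block_index (\<lambda>j. support (t j)) m"

definition s :: "nat \<Rightarrow> nat set" where
  "s i = lift_tail Mx \<psi> d k (u (J i)) i"

definition b :: "(nat \<Rightarrow> real) \<Rightarrow> nat \<Rightarrow> real" where
  "b \<alpha> i = \<alpha> (J i) * coeffs (t (J i)) i"

lemma u_member: "j < m \<Longrightarrow> finite (u j) \<and> card (u j) = k + d \<and> u j \<subseteq> My"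
  using u_plegma unfolding plegma_def by auto

lemma t_plegma: "plegma d My t m"
  unfolding t_def by (rule plegma_head[OF u_plegma m_pos]) simp

lemma t_elt: "j < m \<Longrightarrow> c < d \<Longrightarrow> elt (t j) c = elt (u j) c"
  unfolding t_def using head_props(1) u_member by simp

lemma t_below_pivot:
  assumes "j < m"
  shows "t j \<subseteq> {..<pivot}"
proof
  fix n assume "n \<in> t j"
  then obtain c where "c < d" "n = elt (u j) c" unfolding t_def head_def by auto
  then show "n \<in> {..<pivot}" unfolding pivot_def
    using plegma_cross[OF u_plegma, of c d j 0] assms m_pos k_pos by auto
qed

lemma support_t_finite: "j < m \<Longrightarrow> finite (support (t j))"
  using block t_plegma unfolding plegma_block_def support_def plegma_def by blast

lemma support_t_below_N: "j < m \<Longrightarrow> support (t j) \<subseteq> {..<N}"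
  unfolding N_def using support_below_G support_t_finite t_below_pivot by blast

lemma supports_successive:
  assumes "j' < j" "j < m" "n \<in> support (t j')" "n' \<in> support (t j)"
  shows "n < n'"
proof -
  have "plegma d UNIV (\<lambda>q. if q = 0 then t j' else t j) 2"
    by (rule plegma_pair[OF t_plegma assms(1,2)])
  then show ?thesis
    using block assms(3,4) unfolding plegma_block_def support_def by fastforce
qed

lemma J_less: "J i < m"
  unfolding J_def using block_index_less m_pos by blast

lemma J_mono: "i \<le> i' \<Longrightarrow> J i \<le> J i'"
  unfolding J_def by (rule block_index_mono)

lemma J_eq: "j < m \<Longrightarrow> i \<in> support (t j) \<Longrightarrow> J i = j"
  unfolding J_def using supports_successive by (rule block_index_eq)

lemma s_plegma: "plegma k Mx s N"
  unfolding s_def \<psi>_def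
proof (rule plegma_lift_tail[OF Mx_infinite u_plegma J_less J_mono])
  fix j c assume "j < m" "c < k"
  then have "elt (u 0) d \<le> elt (u j) d"
    using plegma_le[OF u_plegma, of d 0 j] k_pos by simp
  also have "\<dots> \<le> elt (u j) (d + c)"
    using elt_mono u_member \<open>j < m\<close> \<open>c < k\<close> by simp
  finally show "N \<le> G (elt (u j) (d + c))" unfolding N_def pivot_def by (rule G_mono)
qed

lemma s_start: "enumerate Mx (max (G pivot) (L0 pivot) - 1) \<le> elt (s 0) 0"
proof -
  have "max (G pivot) (L0 pivot) \<le> \<psi> pivot" unfolding \<psi>_def by (rule spaced_ge)
  also have "\<dots> \<le> \<psi> (elt (u (J 0)) d)"
    unfolding \<psi>_def pivot_def using plegma_le[OF u_plegma, of d 0 "J 0"] k_pos J_less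
    by (simp add: strict_mono_less_eq[OF spaced_strict_mono])
  finally have "max (G pivot) (L0 pivot) - 1 \<le> \<psi> (elt (u (J 0)) d)"
    by (rule le_trans[OF diff_le_self])
  then have "enumerate Mx (max (G pivot) (L0 pivot) - 1) \<le> enumerate Mx (\<psi> (elt (u (J 0)) d))"
    using Mx_infinite by simp
  also have "\<dots> = elt (s 0) 0"
    unfolding s_def using lift_tail_props(1)[of Mx \<psi> "u (J 0)" k d 0 0] Mx_infinite
      u_member[OF J_less] k_pos \<psi>_def spaced_strict_mono by simp
  finally show ?thesis .
qed

lemma lifted_expansion: "(\<Sum>j<m. \<alpha> j *\<^sub>R z (u j)) = (\<Sum>i<N. b \<alpha> i *\<^sub>R x (s i))"
proof -
  have "(\<Sum>i<N. (\<alpha> (J i) * coeffs (t (J i)) i) *\<^sub>R x (lift_tail Mx \<psi> d k (u (J i)) i)) =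
        (\<Sum>j<m. \<alpha> j *\<^sub>R (\<Sum>i\<in>support (t j). coeffs (t j) i *\<^sub>R x (lift_tail Mx \<psi> d k (u j) i)))"
    by (rule sum_regroup_blocks)
      (use support_t_finite support_t_below_N J_eq J_less coeffs_outside_support in auto)
  then show ?thesis unfolding z_def b_def s_def t_def by simp
qed

lemma block_expansion: "(\<Sum>j<m. \<alpha> j *\<^sub>R y (t j)) = (\<Sum>i<N. b \<alpha> i *\<^sub>R e i)"
proof -
  have "(\<Sum>i<N. (\<alpha> (J i) * coeffs (t (J i)) i) *\<^sub>R e i) =
        (\<Sum>j<m. \<alpha> j *\<^sub>R (\<Sum>i\<in>support (t j). coeffs (t j) i *\<^sub>R e i))"
    by (rule sum_regroup_blocks)
      (use support_t_finite support_t_below_N J_eq J_less coeffs_outside_support in auto)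
  also have "\<dots> = (\<Sum>j<m. \<alpha> j *\<^sub>R y (t j))"
    using schauder_expand[OF basis] support_t_finite unfolding support_def coeffs_def by simp
  finally show ?thesis unfolding b_def by simp
qed

lemma lifted_estimate:
  assumes "\<forall>j<m. \<bar>\<alpha> j\<bar> \<le> 1"
  shows "\<bar>norm (\<Sum>i<N. b \<alpha> i *\<^sub>R x (s i)) - norm (\<Sum>i<N. b \<alpha> i *\<^sub>R e i)\<bar> \<le> 1 / (real pivot + 1)"
proof -
  let ?L = "max (G pivot) (L0 pivot)"
  have b_le: "\<forall>i<N. \<bar>b \<alpha> i / C pivot\<bar> \<le> 1"
  proof (intro allI impI)
    fix i
    have "\<bar>coeffs (t (J i)) i\<bar> \<le> C pivot"
      using coeffs_le_C support_t_finite t_below_pivot J_less by blast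
    then have "\<bar>b \<alpha> i\<bar> \<le> 1 * C pivot"
      unfolding b_def abs_mult using assms J_less by (intro mult_mono) auto
    then show "\<bar>b \<alpha> i / C pivot\<bar> \<le> 1" using C_ge_1[of pivot] by simp
  qed
  have "N \<le> ?L" unfolding N_def by simp
  then have "\<bar>norm (\<Sum>i<N. (b \<alpha> i / C pivot) *\<^sub>R x (s i)) - norm (\<Sum>i<N. (b \<alpha> i / C pivot) *\<^sub>R e i)\<bar>
      \<le> \<delta>x ?L"
    using x_model[OF _ _ s_plegma s_start b_le] G_pos unfolding N_def by simp
  then have "\<bar>norm (\<Sum>i<N. b \<alpha> i *\<^sub>R x (s i)) - norm (\<Sum>i<N. b \<alpha> i *\<^sub>R e i)\<bar> \<le> C pivot * \<delta>x ?L"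
    using C_ge_1[of pivot] by (intro norm_diff_rescale) auto
  also have "\<dots> \<le> C pivot * (1 / ((real pivot + 1) * C pivot))"
    using C_ge_1[of pivot] \<delta>x_small[of pivot ?L] by (intro mult_left_mono) auto
  also have "\<dots> = 1 / (real pivot + 1)"
    using C_ge_1[of pivot] by simp
  finally show ?thesis .
qed

end

context spreading_lift
begin

text \<open>Main estimate: the lift \<open>z\<close> generates \<open>et\<close> as a \<open>(k + d)\<close>-spreading model, with error
  \<open>\<delta>y l + 1 / (l + 1)\<close>: the first term compares the blocks with \<open>et\<close>, the second the lift
  with the blocks.\<close>
theorem z_generates: "generates (k + d) z My et p"
  unfolding generates_def
proof (intro exI[of _ "\<lambda>l. \<delta>y l + inverse (real (Suc l))"] conjI allI impI)
  show "0 < \<delta>y l + inverse (real (Suc l))" for l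
    using \<delta>y_pos[of l] by (simp add: add_pos_pos)
  show "(\<lambda>l. \<delta>y l + inverse (real (Suc l))) \<longlonglongrightarrow> 0"
    using tendsto_add[OF \<delta>y_lim LIMSEQ_inverse_real_of_nat] by simp
next
  fix l m u and \<alpha> :: "nat \<Rightarrow> real"
  assume m: "1 \<le> m" "m \<le> l" and u: "plegma (k + d) My u m"
    and start: "enumerate My (l - 1) \<le> elt (u 0) 0" and \<alpha>: "\<forall>j<m. \<bar>\<alpha> j\<bar> \<le> 1"
  interpret F: lift_family k d x Mx \<delta>x e y My \<delta>y et p m u
    by unfold_locales (use m u in auto)
  have "l - 1 \<le> elt (u 0) 0"
    using le_enumerate[OF My_infinite, of "l - 1"] start by simp
  also have "\<dots> < F.pivot"
    unfolding F.pivot_def using elt_strict_mono F.u_member m k_pos d_pos by simp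
  finally have "1 / (real F.pivot + 1) \<le> inverse (real (Suc l))"
    using m by (simp add: divide_simps)
  then have lift_err: "\<bar>norm (\<Sum>j<m. \<alpha> j *\<^sub>R z (u j)) - norm (\<Sum>j<m. \<alpha> j *\<^sub>R y (F.t j))\<bar>
      \<le> inverse (real (Suc l))"
    using F.lifted_estimate[OF \<alpha>] unfolding F.lifted_expansion F.block_expansion by linarith
  have "elt (F.t 0) 0 = elt (u 0) 0" using F.t_elt m d_pos by simp
  then have block_err: "\<bar>norm (\<Sum>j<m. \<alpha> j *\<^sub>R y (F.t j)) - p (\<Sum>j<m. \<alpha> j *\<^sub>R et j)\<bar> \<le> \<delta>y l"
    using y_model[OF m F.t_plegma _ \<alpha>] start by simp
  show "\<bar>norm (\<Sum>j<m. \<alpha> j *\<^sub>R z (u j)) - p (\<Sum>j<m. \<alpha> j *\<^sub>R et j)\<bar>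
      \<le> \<delta>y l + inverse (real (Suc l))"
    using lift_err block_err by linarith
qed

end

theorem mainTheorem8:
  fixes k d :: nat
    and e :: "nat \<Rightarrow> 'b::banach"
    and et :: "nat \<Rightarrow> 'c::real_vector"
    and p :: "'c \<Rightarrow> real"
    and V :: "'c set"
  assumes "1 \<le> k" and "1 \<le> d"
    and "schauder_basis e"
    and "SM k (UNIV :: 'a::banach set) e norm (span (range e))"
    and "\<exists>y M. infinite M \<and> plegma_block d e y \<and> spreading_model d y M et p V"
  shows "SM (k + d) (UNIV :: 'a set) et p V"
proof -
  obtain x :: "nat set \<Rightarrow> 'a" and Mx where "infinite Mx" "generates k x Mx e norm"
    using assms(4) unfolding SM_def spreading_model_def by blast
  then obtain \<delta>x where "infinite Mx" "\<delta>x \<longlonglongrightarrow> 0" and x_model: "\<forall>l m s a. 1 \<le> m \<longrightarrow> m \<le> l \<longrightarrow>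
      plegma k Mx s m \<longrightarrow> enumerate Mx (l - 1) \<le> elt (s 0) 0 \<longrightarrow> (\<forall>j<m. \<bar>a j\<bar> \<le> 1) \<longrightarrow>
      \<bar>norm (\<Sum>j<m. a j *\<^sub>R x (s j)) - norm (\<Sum>j<m. a j *\<^sub>R e j)\<bar> \<le> \<delta>x l"
    unfolding generates_def by blast
  obtain y My where "infinite My" "plegma_block d e y" and y_sm: "spreading_model d y My et p V"
    using assms(5) by blast
  then obtain \<delta>y where "\<forall>l. 0 < \<delta>y l" "\<delta>y \<longlonglongrightarrow> 0" and y_model: "\<forall>l m s a. 1 \<le> m \<longrightarrow> m \<le> l \<longrightarrow>
      plegma d My s m \<longrightarrow> enumerate My (l - 1) \<le> elt (s 0) 0 \<longrightarrow> (\<forall>j<m. \<bar>a j\<bar> \<le> 1) \<longrightarrow>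
      \<bar>norm (\<Sum>j<m. a j *\<^sub>R y (s j)) - p (\<Sum>j<m. a j *\<^sub>R et j)\<bar> \<le> \<delta>y l"
    unfolding spreading_model_def generates_def by blast
  interpret spreading_lift k d x Mx \<delta>x e y My \<delta>y et p
    by unfold_locales (use assms(1-3) \<open>infinite Mx\<close> \<open>infinite My\<close> \<open>plegma_block d e y\<close>
        \<open>\<delta>x \<longlonglongrightarrow> 0\<close> \<open>\<forall>l. 0 < \<delta>y l\<close> \<open>\<delta>y \<longlonglongrightarrow> 0\<close> x_model y_model in auto)
  have "spreading_model (k + d) z My et p V"
    using y_sm z_generates unfolding spreading_model_def by blast
  then show ?thesis unfolding SM_def using \<open>infinite My\<close> by blast
qed

end
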